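(* (1) For all $x,y\in(0,\infty)$, $$\cosh(\sqrt{xy})\le\sqrt{\cosh x\cosh y}\le\cosh\Big(\sqrt{(x^2+y^2)/2}\Big)\le\tfrac12(\cosh x+\cosh y),$$ with equality if and only if $x=y$. (2) For $0<R<6$ and all $x,y\in(0,\sqrt R)$, $$\tfrac12(\cosh x+\cosh y)\le\cosh\Big(\sqrt{R-\sqrt{(R-x^2)(R-y^2)}}\Big),$$ with equality if and only if $x=y$. (3) For all $x,y\in(0,\infty)$, $$\frac{\sinh\sqrt{xy}}{\sqrt{xy}}\le\sqrt{\frac{\sinh x}{x}\cdot\frac{\sinh y}{y}}\le\frac{\sinh\sqrt{\frac12(x^2+y^2)}}{\sqrt{\frac12(x^2+y^2)}}\le\frac12\Big(\frac{\sinh x}{x}+\frac{\sinh y}{y}\Big),$$ with equality if and only if $x=y$. (4) For $0<R<10$ and all $x,y\in(0,\sqrt R)$, writing $s=\sqrt{R-\sqrt{(R-x^2)(R-y^2)}}$, $$\frac12\Big(\frac{\sinh x}{x}+\frac{\sinh y}{y}\Big)\le\frac{\sinh s}{s},$$ with equality if and only if $x=y$. *)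

theory Defs
  imports Complex_Main
begin

end

theory Submission
  imports Defs
begin

(*
  Each inequality compares G at a quasi-arithmetic mean  phi^-1 ((phi x + phi y) / 2)  with a mean of
  G x and G y: the geometric mean (phi = ln), the quadratic mean (phi s = s^2), the arithmetic mean, and
  the mean generated by  phi s = ln (R - s^2).  So each comparison is strict midpoint convexity or
  concavity of a function of one variable, such as  t |-> ln (G (exp t)),  and by the mean value theorem
  it follows from strict monotonicity of the derivative.  For G = cosh and G s = sinh s / s these
  monotonicity statements become explicit hyperbolic inequalities 0 < f s with f 0 = 0 and f' > 0 on
  (0, oo).  The bounds R < 6 and R < 10 are what make the relevant f' positive; both are sharp as s -> 0.
*)

section \<open>Strict midpoint convexity from the derivative\<close>

lemma DERIV_pos_interior_imp_less:
  fixes f f' :: "real \<Rightarrow> real"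
  assumes "a < b"
    and "\<And>x. a \<le> x \<Longrightarrow> x \<le> b \<Longrightarrow> (f has_real_derivative f' x) (at x)"
    and "\<And>x. a < x \<Longrightarrow> x < b \<Longrightarrow> 0 < f' x"
  shows "f a < f b"
proof -
  obtain z where z: "a < z" "z < b" "f b - f a = (b - a) * f' z"
    using MVT2[OF assms(1,2)] by blast
  have "0 < (b - a) * f' z"
    using assms(1,3) z(1,2) by simp
  with z(3) show ?thesis
    by simp
qed

lemma strict_mono_on_if_DERIV_pos:
  fixes f f' :: "real \<Rightarrow> real"
  assumes "connected I"
    and "\<And>x. x \<in> I \<Longrightarrow> (f has_real_derivative f' x) (at x)"
    and "\<And>x. x \<in> I \<Longrightarrow> 0 < f' x"
  shows "strict_mono_on I f"
proof (rule strict_mono_onI)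
  fix x y assume "x \<in> I" "y \<in> I" "x < y"
  then have sub: "z \<in> I" if "x \<le> z" "z \<le> y" for z
    using assms(1) \<open>x \<in> I\<close> \<open>y \<in> I\<close> that unfolding connected_iff_interval by blast
  show "f x < f y"
    using assms(2,3)[OF sub] by (intro DERIV_pos_interior_imp_less[where f=f and f'=f', OF \<open>x < y\<close>]) auto
qed

lemma strict_antimono_on_if_DERIV_neg:
  fixes f f' :: "real \<Rightarrow> real"
  assumes "connected I"
    and "\<And>x. x \<in> I \<Longrightarrow> (f has_real_derivative f' x) (at x)"
    and "\<And>x. x \<in> I \<Longrightarrow> f' x < 0"
  shows "strict_antimono_on I f"
proof -
  have "strict_mono_on I (\<lambda>x. - f x)"
    using assms by (intro strict_mono_on_if_DERIV_pos[where f'="\<lambda>x. - f' x"])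
      (auto intro!: derivative_eq_intros)
  then show ?thesis
    by (auto simp: monotone_on_def)
qed

lemma monotone_on_cong:
  assumes "monotone_on A ord ord' f" "\<And>x. x \<in> A \<Longrightarrow> f x = g x"
  shows "monotone_on A ord ord' g"
  using assms by (auto simp: monotone_on_def)

lemma midpoint_strict_convex_if_deriv_strict_mono:
  fixes f f' :: "real \<Rightarrow> real"
  assumes "connected I" "a \<in> I" "b \<in> I" "a \<noteq> b"
    and "\<And>x. x \<in> I \<Longrightarrow> (f has_real_derivative f' x) (at x)"
    and "strict_mono_on I f'"
  shows "2 * f ((a + b) / 2) < f a + f b"
proof -
  have less: "2 * f ((a + b) / 2) < f a + f b" if "a \<in> I" "b \<in> I" "a < b" for a b
  proof -
    define m where "m = (a + b) / 2"
    have "a < m" "m < b" "m - a = b - m"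
      using \<open>a < b\<close> by (simp_all add: m_def field_simps)
    have sub: "z \<in> I" if "a \<le> z" "z \<le> b" for z
      using assms(1) \<open>a \<in> I\<close> \<open>b \<in> I\<close> that unfolding connected_iff_interval by blast
    have deriv: "(f has_real_derivative f' x) (at x)" if "a \<le> x" "x \<le> b" for x
      using assms(5) sub that by blast
    obtain z1 where z1: "a < z1" "z1 < m" "f m - f a = (m - a) * f' z1"
      using MVT2[OF \<open>a < m\<close> deriv] \<open>m < b\<close> by auto
    obtain z2 where z2: "m < z2" "z2 < b" "f b - f m = (b - m) * f' z2"
      using MVT2[OF \<open>m < b\<close> deriv] \<open>a < m\<close> by auto
    have "z1 \<in> I" "z2 \<in> I"
      using sub z1 z2 \<open>a < m\<close> \<open>m < b\<close> by simp_all
    then have "f' z1 < f' z2"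
      using assms(6) z1(2) z2(1) by (auto dest: strict_mono_onD)
    then have "(m - a) * f' z1 < (b - m) * f' z2"
      using \<open>a < m\<close> \<open>m - a = b - m\<close> by (metis diff_gt_0_iff_gt mult_strict_left_mono)
    then show ?thesis
      using z1 z2 by (simp add: m_def)
  qed
  show ?thesis
  proof (cases "a < b")
    case False
    then show ?thesis
      using less[of b a] assms(2-4) by (simp add: add.commute)
  qed (use less assms(2,3) in blast)
qed

lemma midpoint_strict_concave_if_deriv_strict_antimono:
  fixes f f' :: "real \<Rightarrow> real"
  assumes "connected I" "a \<in> I" "b \<in> I" "a \<noteq> b"
    and "\<And>x. x \<in> I \<Longrightarrow> (f has_real_derivative f' x) (at x)"
    and "strict_antimono_on I f'"
  shows "f a + f b < 2 * f ((a + b) / 2)"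
proof -
  have "2 * - f ((a + b) / 2) < - f a + - f b"
  proof (rule midpoint_strict_convex_if_deriv_strict_mono[where f'="\<lambda>x. - f' x"])
    show "strict_mono_on I (\<lambda>x. - f' x)"
      using assms(6) by (simp add: monotone_on_def)
  qed (use assms in \<open>auto intro!: derivative_eq_intros\<close>)
  then show ?thesis
    by simp
qed

section \<open>Comparison of means\<close>

lemma exp_midpoint_ln:
  fixes a b :: real
  assumes "0 < a" "0 < b"
  shows "exp ((ln a + ln b) / 2) = sqrt (a * b)"
proof -
  have "(ln a + ln b) / 2 = ln (sqrt (a * b))"
    using assms by (simp add: ln_sqrt ln_mult)
  then show ?thesis
    using assms by simp
qed

lemma sq_less_if_less_sqrt:
  fixes x R :: real
  assumes "0 \<le> x" "x < sqrt R"
  shows "x\<^sup>2 < R"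
  using assms real_sqrt_less_iff[of "x\<^sup>2" R] by simp

lemma geometric_mean_less_if_strict_mono:
  fixes G G' :: "real \<Rightarrow> real"
  assumes deriv: "\<And>s. 0 < s \<Longrightarrow> (G has_real_derivative G' s) (at s)"
    and pos: "\<And>s. 0 < s \<Longrightarrow> 0 < G s"
    and mono: "strict_mono_on {0<..} (\<lambda>s. s * G' s / G s)"
    and "0 < x" "0 < y" "x \<noteq> y"
  shows "G (sqrt (x * y)) < sqrt (G x * G y)"
proof -
  define f where "f t = ln (G (exp t))" for t
  have "(f has_real_derivative exp t * G' (exp t) / G (exp t)) (at t)" for t
  proof -
    have "((\<lambda>t. G (exp t)) has_real_derivative G' (exp t) * exp t) (at t)"
      by (rule DERIV_chain2[OF deriv]) (auto intro!: derivative_eq_intros)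
    then show ?thesis
      unfolding f_def using pos[of "exp t"]
      by (auto intro!: derivative_eq_intros simp: field_simps)
  qed
  moreover have "strict_mono_on UNIV (\<lambda>t. exp t * G' (exp t) / G (exp t))"
    using mono by (auto simp: monotone_on_def)
  ultimately have "2 * f ((ln x + ln y) / 2) < f (ln x) + f (ln y)"
    using \<open>x \<noteq> y\<close> \<open>0 < x\<close> \<open>0 < y\<close>
    by (intro midpoint_strict_convex_if_deriv_strict_mono[where I=UNIV]) auto
  then have "ln (G (sqrt (x * y)) ^ 2) < ln (G x * G y)"
    using assms(4,5) pos[of x] pos[of y] by (simp add: f_def exp_midpoint_ln ln_realpow ln_mult)
  then have "G (sqrt (x * y)) ^ 2 < G x * G y"
    using assms(4,5) pos[of x] pos[of y] pos[of "sqrt (x * y)"] by (simp add: ln_less_cancel_iff)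
  then show ?thesis
    by (rule real_less_rsqrt)
qed

lemma quadratic_mean_greater_if_strict_antimono:
  fixes G G' :: "real \<Rightarrow> real"
  assumes deriv: "\<And>s. 0 < s \<Longrightarrow> (G has_real_derivative G' s) (at s)"
    and pos: "\<And>s. 0 < s \<Longrightarrow> 0 < G s"
    and antimono: "strict_antimono_on {0<..} (\<lambda>s. G' s / (s * G s))"
    and "0 < x" "0 < y" "x \<noteq> y"
  shows "sqrt (G x * G y) < G (sqrt ((x\<^sup>2 + y\<^sup>2) / 2))"
proof -
  define f where "f u = 2 * ln (G (sqrt u))" for u
  have "(f has_real_derivative ((\<lambda>s. G' s / (s * G s)) \<circ> sqrt) u) (at u)" if "0 < u" for u
    unfolding f_def using that pos[of "sqrt u"]
    by (auto intro!: DERIV_chain2[OF deriv] derivative_eq_intros simp: field_simps)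
  moreover have "strict_antimono_on {0<..} ((\<lambda>s. G' s / (s * G s)) \<circ> sqrt)"
    using antimono by (rule monotone_on_o) (auto simp: monotone_on_def)
  ultimately have "f (x\<^sup>2) + f (y\<^sup>2) < 2 * f ((x\<^sup>2 + y\<^sup>2) / 2)"
    using assms(4-6) by (intro midpoint_strict_concave_if_deriv_strict_antimono[where I="{0<..}"])
      (auto simp: power2_eq_iff_nonneg)
  then have "ln (G x * G y) < ln (G (sqrt ((x\<^sup>2 + y\<^sup>2) / 2)) ^ 2)"
    using assms(4,5) pos[of x] pos[of y] by (simp add: f_def ln_realpow ln_mult)
  moreover have "0 < G (sqrt ((x\<^sup>2 + y\<^sup>2) / 2))"
    using assms(4) by (intro pos) (simp add: add_pos_nonneg)
  ultimately have "G x * G y < G (sqrt ((x\<^sup>2 + y\<^sup>2) / 2)) ^ 2"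
    using pos[of x] pos[of y] assms(4,5) by (simp add: ln_less_cancel_iff)
  then show ?thesis
    using \<open>0 < G (sqrt ((x\<^sup>2 + y\<^sup>2) / 2))\<close> by (intro real_less_lsqrt) auto
qed

lemma arithmetic_mean_greater_if_strict_mono:
  fixes G G' :: "real \<Rightarrow> real"
  assumes deriv: "\<And>s. 0 < s \<Longrightarrow> (G has_real_derivative G' s) (at s)"
    and mono: "strict_mono_on {0<..} (\<lambda>s. G' s / s)"
    and "0 < x" "0 < y" "x \<noteq> y"
  shows "G (sqrt ((x\<^sup>2 + y\<^sup>2) / 2)) < (G x + G y) / 2"
proof -
  define f where "f u = 2 * G (sqrt u)" for u
  have "(f has_real_derivative ((\<lambda>s. G' s / s) \<circ> sqrt) u) (at u)" if "0 < u" for u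
    unfolding f_def using that
    by (auto intro!: DERIV_chain2[OF deriv] derivative_eq_intros simp: field_simps)
  moreover have "strict_mono_on {0<..} ((\<lambda>s. G' s / s) \<circ> sqrt)"
    using mono by (rule monotone_on_o) (auto simp: monotone_on_def)
  ultimately have "2 * f ((x\<^sup>2 + y\<^sup>2) / 2) < f (x\<^sup>2) + f (y\<^sup>2)"
    using assms(3-5) by (intro midpoint_strict_convex_if_deriv_strict_mono[where I="{0<..}"])
      (auto simp: power2_eq_iff_nonneg)
  then show ?thesis
    using assms(3,4) by (simp add: f_def)
qed

lemma arithmetic_mean_less_R_mean_if_strict_antimono:
  fixes G G' :: "real \<Rightarrow> real"
  assumes deriv: "\<And>s. 0 < s \<Longrightarrow> s < sqrt R \<Longrightarrow> (G has_real_derivative G' s) (at s)"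
    and antimono: "strict_antimono_on {0<..<sqrt R} (\<lambda>s. (R - s\<^sup>2) * G' s / s)"
    and "0 < x" "x < sqrt R" "0 < y" "y < sqrt R" "x \<noteq> y"
  shows "(G x + G y) / 2 < G (sqrt (R - sqrt ((R - x\<^sup>2) * (R - y\<^sup>2))))"
proof -
  have x2: "x\<^sup>2 < R" and y2: "y\<^sup>2 < R"
    using assms(3-6) by (simp_all add: sq_less_if_less_sqrt)
  then have "0 < R"
    using zero_le_power2[of x] by linarith
  define m where "m s = (R - s\<^sup>2) * G' s / s" for s
  define g where "g t = sqrt (R - exp t)" for t
  define f where "f t = - 2 * G (g t)" for t
  have g_bounds: "0 < g t" "g t < sqrt R" "(g t)\<^sup>2 = R - exp t" if "t < ln R" for t
  proof -
    have "exp t < R"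
      using that \<open>0 < R\<close> by (metis exp_less_cancel_iff exp_ln)
    then show "0 < g t" "g t < sqrt R" "(g t)\<^sup>2 = R - exp t"
      by (simp_all add: g_def)
  qed
  have "(f has_real_derivative (m \<circ> g) t) (at t)" if "t < ln R" for t
  proof -
    have "((\<lambda>t. G (g t)) has_real_derivative G' (g t) * (inverse (g t) / 2 * - exp t)) (at t)"
      unfolding g_def using g_bounds[OF that]
      by (intro DERIV_chain2[OF deriv]) (auto intro!: derivative_eq_intros simp: g_def)
    then show ?thesis
      unfolding f_def m_def o_def using g_bounds[OF that]
      by (auto intro!: derivative_eq_intros simp: field_simps)
  qed
  moreover have "strict_mono_on {..<ln R} (m \<circ> g)"
  proof (rule strict_mono_onI)
    fix t u assume "t \<in> {..<ln R}" "u \<in> {..<ln R}" "t < u"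
    then have "g u < g t"
      using g_bounds by (simp add: g_def)
    moreover have "g t \<in> {0<..<sqrt R}" "g u \<in> {0<..<sqrt R}"
      using g_bounds \<open>t \<in> {..<ln R}\<close> \<open>u \<in> {..<ln R}\<close> by auto
    ultimately show "(m \<circ> g) t < (m \<circ> g) u"
      using monotone_onD[OF antimono] by (simp add: m_def)
  qed
  ultimately have "2 * f ((ln (R - x\<^sup>2) + ln (R - y\<^sup>2)) / 2) < f (ln (R - x\<^sup>2)) + f (ln (R - y\<^sup>2))"
    using x2 y2 assms(3,5,7) \<open>0 < R\<close>
    by (intro midpoint_strict_convex_if_deriv_strict_mono[where I="{..<ln R}"])
      (auto simp: power2_eq_iff_nonneg)
  then show ?thesis
    using x2 y2 assms(3,5) by (simp add: f_def g_def exp_midpoint_ln)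
qed

section \<open>Hyperbolic inequalities\<close>

lemma pos_if_deriv_pos_from_zero:
  fixes f f' :: "real \<Rightarrow> real"
  assumes "f 0 = 0"
    and "\<And>s. 0 \<le> s \<Longrightarrow> (f has_real_derivative f' s) (at s)"
    and "\<And>s. 0 < s \<Longrightarrow> 0 < f' s"
    and "0 < s"
  shows "0 < f s"
  using DERIV_pos_interior_imp_less[of 0 s f f'] assms by auto

lemma sinh_less_mult_cosh:
  fixes s :: real
  assumes "0 < s"
  shows "sinh s < s * cosh s"
proof -
  have "0 < s * cosh s - sinh s"
    by (rule pos_if_deriv_pos_from_zero[where f="\<lambda>s. s * cosh s - sinh s" and f'="\<lambda>s. s * sinh s"])
      (use assms in \<open>auto intro!: derivative_eq_intros\<close>)
  then show ?thesis
    by simp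
qed

lemma less_sinh:
  fixes s :: real
  assumes "0 < s"
  shows "s < sinh s"
proof -
  have "0 < sinh s - s"
    by (rule pos_if_deriv_pos_from_zero[where f="\<lambda>s. sinh s - s" and f'="\<lambda>s. cosh s - 1"])
      (use assms in \<open>auto intro!: derivative_eq_intros simp: cosh_real_nonneg_less_iff[of 0, simplified]\<close>)
  then show ?thesis
    by simp
qed

lemma less_sinh_mult_cosh:
  fixes s :: real
  assumes "0 < s"
  shows "s < sinh s * cosh s"
proof -
  have "s < sinh s * 1"
    using assms less_sinh by simp
  also have "\<dots> \<le> sinh s * cosh s"
    using assms cosh_real_ge_1[of s] by (intro mult_left_mono) auto
  finally show ?thesis .
qed

lemma mult_cosh_less_sinh_cubic:
  fixes s :: real
  assumes "0 < s"
  shows "3 * s * cosh s < (s\<^sup>2 + 3) * sinh s"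
proof -
  have "0 < (s\<^sup>2 + 3) * sinh s - 3 * s * cosh s"
  proof (rule pos_if_deriv_pos_from_zero[where f="\<lambda>s. (s\<^sup>2 + 3) * sinh s - 3 * s * cosh s"
        and f'="\<lambda>s. s * (s * cosh s - sinh s)"])
    show "((\<lambda>s. (s\<^sup>2 + 3) * sinh s - 3 * s * cosh s) has_real_derivative s * (s * cosh s - sinh s)) (at s)" for s
      by (auto intro!: derivative_eq_intros simp: algebra_simps power2_eq_square)
  qed (use assms sinh_less_mult_cosh in auto)
  then show ?thesis
    by simp
qed

lemma six_minus_sq_mult_less:
  fixes s :: real
  assumes "0 < s"
  shows "(6 - s\<^sup>2) * (s * cosh s - sinh s) < 2 * s\<^sup>2 * sinh s"
proof -
  have "0 < 2 * s\<^sup>2 * sinh s - (6 - s\<^sup>2) * (s * cosh s - sinh s)"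
  proof (rule pos_if_deriv_pos_from_zero
      [where f="\<lambda>s. 2 * s\<^sup>2 * sinh s - (6 - s\<^sup>2) * (s * cosh s - sinh s)"
        and f'="\<lambda>s. s * (4 * (s * cosh s - sinh s) + s\<^sup>2 * sinh s)"])
    show "((\<lambda>s. 2 * s\<^sup>2 * sinh s - (6 - s\<^sup>2) * (s * cosh s - sinh s)) has_real_derivative
        s * (4 * (s * cosh s - sinh s) + s\<^sup>2 * sinh s)) (at s)" for s :: real
      by (auto intro!: derivative_eq_intros simp: algebra_simps power2_eq_square)
  next
    fix t :: real
    assume "0 < t"
    then show "0 < t * (4 * (t * cosh t - sinh t) + t\<^sup>2 * sinh t)"
      using sinh_less_mult_cosh[of t] by (intro mult_pos_pos add_pos_pos) auto
  qed (use assms in auto)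
  then show ?thesis
    by simp
qed

lemma two_sinh_sq_less:
  fixes s :: real
  assumes "0 < s"
  shows "2 * (sinh s)\<^sup>2 < s\<^sup>2 + s * sinh s * cosh s"
proof -
  have deriv_pos: "3 * sinh t * cosh t < 2 * t + t * ((cosh t)\<^sup>2 + (sinh t)\<^sup>2)" if "0 < t" for t :: real
  proof -
    have "0 < 2 * t + t * ((cosh t)\<^sup>2 + (sinh t)\<^sup>2) - 3 * sinh t * cosh t"
    proof (rule pos_if_deriv_pos_from_zero
        [where f="\<lambda>t. 2 * t + t * ((cosh t)\<^sup>2 + (sinh t)\<^sup>2) - 3 * sinh t * cosh t"
          and f'="\<lambda>t. 4 * sinh t * (t * cosh t - sinh t)"])
      show "((\<lambda>t. 2 * t + t * ((cosh t)\<^sup>2 + (sinh t)\<^sup>2) - 3 * sinh t * cosh t) has_real_derivative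
          4 * sinh t * (t * cosh t - sinh t)) (at t)" for t :: real
        using cosh_square_eq[of t]
        by (auto intro!: derivative_eq_intros simp: algebra_simps power2_eq_square)
    qed (use that sinh_less_mult_cosh in auto)
    then show ?thesis
      by simp
  qed
  have "0 < s\<^sup>2 + s * sinh s * cosh s - 2 * (sinh s)\<^sup>2"
  proof (rule pos_if_deriv_pos_from_zero
      [where f="\<lambda>s. s\<^sup>2 + s * sinh s * cosh s - 2 * (sinh s)\<^sup>2"
        and f'="\<lambda>t. 2 * t + t * ((cosh t)\<^sup>2 + (sinh t)\<^sup>2) - 3 * sinh t * cosh t"])
    show "((\<lambda>s. s\<^sup>2 + s * sinh s * cosh s - 2 * (sinh s)\<^sup>2) has_real_derivative
        2 * t + t * ((cosh t)\<^sup>2 + (sinh t)\<^sup>2) - 3 * sinh t * cosh t) (at t)" for t :: real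
      by (auto intro!: derivative_eq_intros simp: algebra_simps power2_eq_square)
  qed (use assms deriv_pos in auto)
  then show ?thesis
    by simp
qed

lemma ten_minus_sq_mult_less:
  fixes s :: real
  assumes "0 < s"
  shows "(10 - s\<^sup>2) * ((s\<^sup>2 + 3) * sinh s - 3 * s * cosh s) < 2 * s\<^sup>2 * (s * cosh s - sinh s)"
proof -
  have deriv_pos: "12 * t * cosh t < t ^ 3 * cosh t + 3 * t\<^sup>2 * sinh t + 12 * sinh t" if "0 < t" for t :: real
  proof -
    have "0 < t ^ 3 * cosh t + 3 * t\<^sup>2 * sinh t + 12 * sinh t - 12 * t * cosh t"
    proof (rule pos_if_deriv_pos_from_zero
        [where f="\<lambda>t. t ^ 3 * cosh t + 3 * t\<^sup>2 * sinh t + 12 * sinh t - 12 * t * cosh t"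
          and f'="\<lambda>t. t * (6 * (t * cosh t - sinh t) + t\<^sup>2 * sinh t)"])
      show "((\<lambda>t. t ^ 3 * cosh t + 3 * t\<^sup>2 * sinh t + 12 * sinh t - 12 * t * cosh t) has_real_derivative
          t * (6 * (t * cosh t - sinh t) + t\<^sup>2 * sinh t)) (at t)" for t :: real
        by (auto intro!: derivative_eq_intros simp: algebra_simps power2_eq_square power3_eq_cube)
    next
      fix t :: real
      assume "0 < t"
      then show "0 < t * (6 * (t * cosh t - sinh t) + t\<^sup>2 * sinh t)"
        using sinh_less_mult_cosh[of t] by (intro mult_pos_pos add_pos_pos) auto
    qed (use that in auto)
    then show ?thesis
      by simp
  qed
  have "0 < 2 * s\<^sup>2 * (s * cosh s - sinh s) - (10 - s\<^sup>2) * ((s\<^sup>2 + 3) * sinh s - 3 * s * cosh s)"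
  proof (rule pos_if_deriv_pos_from_zero
      [where f="\<lambda>s. 2 * s\<^sup>2 * (s * cosh s - sinh s) - (10 - s\<^sup>2) * ((s\<^sup>2 + 3) * sinh s - 3 * s * cosh s)"
        and f'="\<lambda>t. t * (t ^ 3 * cosh t + 3 * t\<^sup>2 * sinh t + 12 * sinh t - 12 * t * cosh t)"])
    show "((\<lambda>s. 2 * s\<^sup>2 * (s * cosh s - sinh s) - (10 - s\<^sup>2) * ((s\<^sup>2 + 3) * sinh s - 3 * s * cosh s))
        has_real_derivative t * (t ^ 3 * cosh t + 3 * t\<^sup>2 * sinh t + 12 * sinh t - 12 * t * cosh t)) (at t)"
      for t :: real
      by (auto intro!: derivative_eq_intros simp: algebra_simps power2_eq_square power3_eq_cube)
  qed (use assms deriv_pos in auto)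
  then show ?thesis
    by simp
qed

lemma mult_sinh_div_cosh_strict_mono: "strict_mono_on {0<..} (\<lambda>s::real. s * sinh s / cosh s)"
proof (rule strict_mono_on_if_DERIV_pos[where f'="\<lambda>s. (sinh s * cosh s + s) / (cosh s)\<^sup>2"])
  show "((\<lambda>s. s * sinh s / cosh s) has_real_derivative (sinh s * cosh s + s) / (cosh s)\<^sup>2) (at s)"
    for s :: real
    using cosh_square_eq[of s]
    by (auto intro!: derivative_eq_intros simp: field_simps power2_eq_square)
qed (auto intro!: divide_pos_pos add_pos_pos)

lemma sinh_div_mult_cosh_strict_antimono: "strict_antimono_on {0<..} (\<lambda>s::real. sinh s / (s * cosh s))"
proof (rule strict_antimono_on_if_DERIV_neg[where f'="\<lambda>s. (s - sinh s * cosh s) / (s * cosh s)\<^sup>2"])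
  show "((\<lambda>s. sinh s / (s * cosh s)) has_real_derivative (s - sinh s * cosh s) / (s * cosh s)\<^sup>2) (at s)"
    if "s \<in> {0<..}" for s :: real
    using that cosh_square_eq[of s]
    by (auto intro!: derivative_eq_intros simp: field_simps power2_eq_square)
  show "(s - sinh s * cosh s) / (s * cosh s)\<^sup>2 < 0" if "s \<in> {0<..}" for s :: real
    using that less_sinh_mult_cosh[of s] by (simp add: divide_neg_pos)
qed auto

lemma sinh_div_strict_mono: "strict_mono_on {0<..} (\<lambda>s::real. sinh s / s)"
proof (rule strict_mono_on_if_DERIV_pos[where f'="\<lambda>s. (s * cosh s - sinh s) / s\<^sup>2"])
  show "((\<lambda>s. sinh s / s) has_real_derivative (s * cosh s - sinh s) / s\<^sup>2) (at s)"
    if "s \<in> {0<..}" for s :: real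
    using that by (auto intro!: derivative_eq_intros simp: field_simps power2_eq_square)
qed (auto simp: sinh_less_mult_cosh)

lemma gap_mult_sinh_div_strict_antimono:
  fixes R :: real
  assumes "R \<le> 6"
  shows "strict_antimono_on {0<..<sqrt R} (\<lambda>s. (R - s\<^sup>2) * sinh s / s)"
proof (rule strict_antimono_on_if_DERIV_neg
    [where f'="\<lambda>s. ((R - s\<^sup>2) * (s * cosh s - sinh s) - 2 * s\<^sup>2 * sinh s) / s\<^sup>2"])
  show "((\<lambda>s. (R - s\<^sup>2) * sinh s / s) has_real_derivative
      ((R - s\<^sup>2) * (s * cosh s - sinh s) - 2 * s\<^sup>2 * sinh s) / s\<^sup>2) (at s)"
    if "s \<in> {0<..<sqrt R}" for s
    using that by (auto intro!: derivative_eq_intros simp: field_simps power2_eq_square)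
  show "((R - s\<^sup>2) * (s * cosh s - sinh s) - 2 * s\<^sup>2 * sinh s) / s\<^sup>2 < 0"
    if "s \<in> {0<..<sqrt R}" for s
  proof -
    have "(R - s\<^sup>2) * (s * cosh s - sinh s) \<le> (6 - s\<^sup>2) * (s * cosh s - sinh s)"
      using that assms sinh_less_mult_cosh[of s] by (intro mult_right_mono) auto
    then show ?thesis
      using that six_minus_sq_mult_less[of s] by (simp add: divide_neg_pos)
  qed
qed auto

lemma mult_cosh_div_sinh_strict_mono: "strict_mono_on {0<..} (\<lambda>s::real. s * cosh s / sinh s)"
proof (rule strict_mono_on_if_DERIV_pos[where f'="\<lambda>s. (sinh s * cosh s - s) / (sinh s)\<^sup>2"])
  show "((\<lambda>s. s * cosh s / sinh s) has_real_derivative (sinh s * cosh s - s) / (sinh s)\<^sup>2) (at s)"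
    if "s \<in> {0<..}" for s :: real
    using that cosh_square_eq[of s]
    by (auto intro!: derivative_eq_intros simp: field_simps power2_eq_square)
qed (auto simp: less_sinh_mult_cosh)

lemma mult_cosh_minus_sinh_div_sq_mult_sinh_strict_antimono:
  "strict_antimono_on {0<..} (\<lambda>s::real. (s * cosh s - sinh s) / (s\<^sup>2 * sinh s))"
proof (rule strict_antimono_on_if_DERIV_neg
    [where f'="\<lambda>s. (2 * (sinh s)\<^sup>2 - s\<^sup>2 - s * sinh s * cosh s) / (s ^ 3 * (sinh s)\<^sup>2)"])
  show "((\<lambda>s. (s * cosh s - sinh s) / (s\<^sup>2 * sinh s)) has_real_derivative
      (2 * (sinh s)\<^sup>2 - s\<^sup>2 - s * sinh s * cosh s) / (s ^ 3 * (sinh s)\<^sup>2)) (at s)"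
    if "s \<in> {0<..}" for s :: real
    using that cosh_square_eq[of s]
    by (auto intro!: derivative_eq_intros simp: field_simps power2_eq_square power3_eq_cube)
  show "(2 * (sinh s)\<^sup>2 - s\<^sup>2 - s * sinh s * cosh s) / (s ^ 3 * (sinh s)\<^sup>2) < 0"
    if "s \<in> {0<..}" for s :: real
    using that two_sinh_sq_less[of s] by (intro divide_neg_pos) auto
qed auto

lemma mult_cosh_minus_sinh_div_cube_strict_mono:
  "strict_mono_on {0<..} (\<lambda>s::real. (s * cosh s - sinh s) / s ^ 3)"
proof (rule strict_mono_on_if_DERIV_pos
    [where f'="\<lambda>s. ((s\<^sup>2 + 3) * sinh s - 3 * s * cosh s) / s ^ 4"])
  show "((\<lambda>s. (s * cosh s - sinh s) / s ^ 3) has_real_derivative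
      ((s\<^sup>2 + 3) * sinh s - 3 * s * cosh s) / s ^ 4) (at s)"
    if "s \<in> {0<..}" for s :: real
    using that by (auto intro!: derivative_eq_intros simp: field_simps eval_nat_numeral)
qed (auto simp: mult_cosh_less_sinh_cubic)

lemma gap_mult_cosh_minus_sinh_div_cube_strict_antimono:
  fixes R :: real
  assumes "R \<le> 10"
  shows "strict_antimono_on {0<..<sqrt R} (\<lambda>s. (R - s\<^sup>2) * (s * cosh s - sinh s) / s ^ 3)"
proof (rule strict_antimono_on_if_DERIV_neg[where f'="\<lambda>s. ((R - s\<^sup>2) * ((s\<^sup>2 + 3) * sinh s - 3 * s * cosh s)
      - 2 * s\<^sup>2 * (s * cosh s - sinh s)) / s ^ 4"])
  show "((\<lambda>s. (R - s\<^sup>2) * (s * cosh s - sinh s) / s ^ 3) has_real_derivative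
      ((R - s\<^sup>2) * ((s\<^sup>2 + 3) * sinh s - 3 * s * cosh s) - 2 * s\<^sup>2 * (s * cosh s - sinh s)) / s ^ 4) (at s)"
    if "s \<in> {0<..<sqrt R}" for s
    using that by (auto intro!: derivative_eq_intros simp: field_simps eval_nat_numeral)
  show "((R - s\<^sup>2) * ((s\<^sup>2 + 3) * sinh s - 3 * s * cosh s) - 2 * s\<^sup>2 * (s * cosh s - sinh s)) / s ^ 4 < 0"
    if "s \<in> {0<..<sqrt R}" for s
  proof -
    have "(R - s\<^sup>2) * ((s\<^sup>2 + 3) * sinh s - 3 * s * cosh s)
        \<le> (10 - s\<^sup>2) * ((s\<^sup>2 + 3) * sinh s - 3 * s * cosh s)"
      using that assms mult_cosh_less_sinh_cubic[of s] by (intro mult_right_mono) auto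
    then show ?thesis
      using that ten_minus_sq_mult_less[of s] by (simp add: divide_neg_pos)
  qed
qed auto

lemma DERIV_cosh_real: "(cosh has_real_derivative sinh s) (at s)"
  by (auto intro!: derivative_eq_intros)

lemma DERIV_sinh_div:
  fixes s :: real
  assumes "s \<noteq> 0"
  shows "((\<lambda>s. sinh s / s) has_real_derivative (s * cosh s - sinh s) / s\<^sup>2) (at s)"
  using assms by (auto intro!: derivative_eq_intros simp: field_simps power2_eq_square)

lemma cosh_mean_chain:
  fixes x y :: real
  assumes "0 < x" "0 < y"
  shows "(cosh (sqrt (x * y)) \<le> sqrt (cosh x * cosh y)
       \<and> sqrt (cosh x * cosh y) \<le> cosh (sqrt ((x\<^sup>2 + y\<^sup>2) / 2))
       \<and> cosh (sqrt ((x\<^sup>2 + y\<^sup>2) / 2)) \<le> (cosh x + cosh y) / 2)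
    \<and> (cosh (sqrt (x * y)) = sqrt (cosh x * cosh y) \<longleftrightarrow> x = y)
    \<and> (sqrt (cosh x * cosh y) = cosh (sqrt ((x\<^sup>2 + y\<^sup>2) / 2)) \<longleftrightarrow> x = y)
    \<and> (cosh (sqrt ((x\<^sup>2 + y\<^sup>2) / 2)) = (cosh x + cosh y) / 2 \<longleftrightarrow> x = y)"
proof (cases "x = y")
  case False
  have "cosh (sqrt (x * y)) < sqrt (cosh x * cosh y)"
    by (rule geometric_mean_less_if_strict_mono[OF DERIV_cosh_real _ mult_sinh_div_cosh_strict_mono])
      (use assms False in auto)
  moreover have "sqrt (cosh x * cosh y) < cosh (sqrt ((x\<^sup>2 + y\<^sup>2) / 2))"
    by (rule quadratic_mean_greater_if_strict_antimono
        [OF DERIV_cosh_real _ sinh_div_mult_cosh_strict_antimono]) (use assms False in auto)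
  moreover have "cosh (sqrt ((x\<^sup>2 + y\<^sup>2) / 2)) < (cosh x + cosh y) / 2"
    by (rule arithmetic_mean_greater_if_strict_mono[OF DERIV_cosh_real sinh_div_strict_mono])
      (use assms False in auto)
  ultimately show ?thesis
    using False by auto
qed (use assms in simp)

lemma cosh_R_mean_chain:
  fixes R x y :: real
  assumes "R \<le> 6" "0 < x" "x < sqrt R" "0 < y" "y < sqrt R"
  shows "(cosh x + cosh y) / 2 \<le> cosh (sqrt (R - sqrt ((R - x\<^sup>2) * (R - y\<^sup>2))))
    \<and> ((cosh x + cosh y) / 2 = cosh (sqrt (R - sqrt ((R - x\<^sup>2) * (R - y\<^sup>2)))) \<longleftrightarrow> x = y)"
proof (cases "x = y")
  case False
  have "(cosh x + cosh y) / 2 < cosh (sqrt (R - sqrt ((R - x\<^sup>2) * (R - y\<^sup>2))))"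
    by (rule arithmetic_mean_less_R_mean_if_strict_antimono
        [OF DERIV_cosh_real gap_mult_sinh_div_strict_antimono[OF assms(1)]]) (use assms False in auto)
  then show ?thesis
    using False by auto
next
  case True
  then show ?thesis
    using assms(2,3) sq_less_if_less_sqrt[of x R] by simp
qed

lemma sinh_div_mean_chain:
  fixes x y :: real
  assumes "0 < x" "0 < y"
  shows "(sinh (sqrt (x * y)) / sqrt (x * y) \<le> sqrt ((sinh x / x) * (sinh y / y))
       \<and> sqrt ((sinh x / x) * (sinh y / y))
           \<le> sinh (sqrt ((x\<^sup>2 + y\<^sup>2) / 2)) / sqrt ((x\<^sup>2 + y\<^sup>2) / 2)
       \<and> sinh (sqrt ((x\<^sup>2 + y\<^sup>2) / 2)) / sqrt ((x\<^sup>2 + y\<^sup>2) / 2)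
           \<le> (sinh x / x + sinh y / y) / 2)
    \<and> (sinh (sqrt (x * y)) / sqrt (x * y) = sqrt ((sinh x / x) * (sinh y / y)) \<longleftrightarrow> x = y)
    \<and> (sqrt ((sinh x / x) * (sinh y / y))
           = sinh (sqrt ((x\<^sup>2 + y\<^sup>2) / 2)) / sqrt ((x\<^sup>2 + y\<^sup>2) / 2) \<longleftrightarrow> x = y)
    \<and> (sinh (sqrt ((x\<^sup>2 + y\<^sup>2) / 2)) / sqrt ((x\<^sup>2 + y\<^sup>2) / 2)
           = (sinh x / x + sinh y / y) / 2 \<longleftrightarrow> x = y)"
proof (cases "x = y")
  case False
  have "strict_mono_on {0<..} (\<lambda>s::real. s * cosh s / sinh s - 1)"
    using mult_cosh_div_sinh_strict_mono by (auto simp: monotone_on_def)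
  then have "strict_mono_on {0<..} (\<lambda>s::real. s * ((s * cosh s - sinh s) / s\<^sup>2) / (sinh s / s))"
    by (rule monotone_on_cong) (simp add: field_simps power2_eq_square)
  then have "sinh (sqrt (x * y)) / sqrt (x * y) < sqrt ((sinh x / x) * (sinh y / y))"
    using assms False by (intro geometric_mean_less_if_strict_mono[OF DERIV_sinh_div]) auto
  moreover have "strict_antimono_on {0<..} (\<lambda>s::real. (s * cosh s - sinh s) / s\<^sup>2 / (s * (sinh s / s)))"
    using mult_cosh_minus_sinh_div_sq_mult_sinh_strict_antimono
    by (rule monotone_on_cong) (simp add: field_simps power2_eq_square)
  then have "sqrt ((sinh x / x) * (sinh y / y))
      < sinh (sqrt ((x\<^sup>2 + y\<^sup>2) / 2)) / sqrt ((x\<^sup>2 + y\<^sup>2) / 2)"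
    using assms False by (intro quadratic_mean_greater_if_strict_antimono[OF DERIV_sinh_div]) auto
  moreover have "strict_mono_on {0<..} (\<lambda>s::real. (s * cosh s - sinh s) / s\<^sup>2 / s)"
    using mult_cosh_minus_sinh_div_cube_strict_mono
    by (rule monotone_on_cong) (simp add: field_simps eval_nat_numeral)
  then have "sinh (sqrt ((x\<^sup>2 + y\<^sup>2) / 2)) / sqrt ((x\<^sup>2 + y\<^sup>2) / 2)
      < (sinh x / x + sinh y / y) / 2"
    using assms False by (intro arithmetic_mean_greater_if_strict_mono[OF DERIV_sinh_div]) auto
  ultimately show ?thesis
    using False by auto
next
  case True
  have "sqrt ((sinh x / x) * (sinh x / x)) = sinh x / x"
    using assms(1) by (subst real_sqrt_abs2) simp
  with True assms show ?thesis
    by simp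
qed

lemma sinh_div_R_mean_chain:
  fixes R x y :: real
  assumes "R \<le> 10" "0 < x" "x < sqrt R" "0 < y" "y < sqrt R"
  defines "s \<equiv> sqrt (R - sqrt ((R - x\<^sup>2) * (R - y\<^sup>2)))"
  shows "(sinh x / x + sinh y / y) / 2 \<le> sinh s / s
    \<and> ((sinh x / x + sinh y / y) / 2 = sinh s / s \<longleftrightarrow> x = y)"
proof (cases "x = y")
  case False
  have "strict_antimono_on {0<..<sqrt R} (\<lambda>s. (R - s\<^sup>2) * ((s * cosh s - sinh s) / s\<^sup>2) / s)"
    using gap_mult_cosh_minus_sinh_div_cube_strict_antimono[OF assms(1)]
    by (rule monotone_on_cong) (simp add: field_simps eval_nat_numeral)
  then have "(sinh x / x + sinh y / y) / 2 < sinh s / s"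
    unfolding s_def using assms(2-5) False
    by (intro arithmetic_mean_less_R_mean_if_strict_antimono[OF DERIV_sinh_div]) auto
  then show ?thesis
    using False by auto
next
  case True
  then show ?thesis
    using assms(2,3) sq_less_if_less_sqrt[of x R] by (simp add: s_def)
qed

theorem corollary3p8:
  shows
  "(\<forall>x y :: real. 0 < x \<and> 0 < y \<longrightarrow>
      (cosh (sqrt (x * y)) \<le> sqrt (cosh x * cosh y)
       \<and> sqrt (cosh x * cosh y) \<le> cosh (sqrt ((x\<^sup>2 + y\<^sup>2) / 2))
       \<and> cosh (sqrt ((x\<^sup>2 + y\<^sup>2) / 2)) \<le> (cosh x + cosh y) / 2)
    \<and> (cosh (sqrt (x * y)) = sqrt (cosh x * cosh y) \<longleftrightarrow> x = y)
    \<and> (sqrt (cosh x * cosh y) = cosh (sqrt ((x\<^sup>2 + y\<^sup>2) / 2)) \<longleftrightarrow> x = y)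
    \<and> (cosh (sqrt ((x\<^sup>2 + y\<^sup>2) / 2)) = (cosh x + cosh y) / 2 \<longleftrightarrow> x = y))
 \<and> (\<forall>R x y :: real. 0 < R \<and> R < 6 \<and> 0 < x \<and> x < sqrt R \<and> 0 < y \<and> y < sqrt R \<longrightarrow>
      (cosh x + cosh y) / 2 \<le> cosh (sqrt (R - sqrt ((R - x\<^sup>2) * (R - y\<^sup>2))))
    \<and> ((cosh x + cosh y) / 2 = cosh (sqrt (R - sqrt ((R - x\<^sup>2) * (R - y\<^sup>2)))) \<longleftrightarrow> x = y))
 \<and> (\<forall>x y :: real. 0 < x \<and> 0 < y \<longrightarrow>
      (sinh (sqrt (x * y)) / sqrt (x * y) \<le> sqrt ((sinh x / x) * (sinh y / y))
       \<and> sqrt ((sinh x / x) * (sinh y / y))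
           \<le> sinh (sqrt ((x\<^sup>2 + y\<^sup>2) / 2)) / sqrt ((x\<^sup>2 + y\<^sup>2) / 2)
       \<and> sinh (sqrt ((x\<^sup>2 + y\<^sup>2) / 2)) / sqrt ((x\<^sup>2 + y\<^sup>2) / 2)
           \<le> (sinh x / x + sinh y / y) / 2)
    \<and> (sinh (sqrt (x * y)) / sqrt (x * y) = sqrt ((sinh x / x) * (sinh y / y)) \<longleftrightarrow> x = y)
    \<and> (sqrt ((sinh x / x) * (sinh y / y))
           = sinh (sqrt ((x\<^sup>2 + y\<^sup>2) / 2)) / sqrt ((x\<^sup>2 + y\<^sup>2) / 2) \<longleftrightarrow> x = y)
    \<and> (sinh (sqrt ((x\<^sup>2 + y\<^sup>2) / 2)) / sqrt ((x\<^sup>2 + y\<^sup>2) / 2)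
           = (sinh x / x + sinh y / y) / 2 \<longleftrightarrow> x = y))
 \<and> (\<forall>R x y :: real. 0 < R \<and> R < 10 \<and> 0 < x \<and> x < sqrt R \<and> 0 < y \<and> y < sqrt R \<longrightarrow>
      (let s = sqrt (R - sqrt ((R - x\<^sup>2) * (R - y\<^sup>2))) in
        (sinh x / x + sinh y / y) / 2 \<le> sinh s / s
      \<and> ((sinh x / x + sinh y / y) / 2 = sinh s / s \<longleftrightarrow> x = y)))"
  unfolding Let_def
  using cosh_mean_chain cosh_R_mean_chain[OF less_imp_le] sinh_div_mean_chain
    sinh_div_R_mean_chain[OF less_imp_le]
  by blast

end
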